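(* Let $\mathit{VI}$ be a finite set of variables with $\#\mathit{VI}=n$. For each $sh_1,sh_2\in\mathit{SH}$, each $\sigma\in\mathit{Subst}$ and each $k\in\mathbb{N}$ with $1\le k\le n$: if $\rho_{\mathit{TSD}_k}(sh_1)=\rho_{\mathit{TSD}_k}(sh_2)$ then $\rho_{\mathit{TSD}_k}(\mathrm{amgu}(sh_1,\sigma))=\rho_{\mathit{TSD}_k}(\mathrm{amgu}(sh_2,\sigma))$.
   Context: $\mathit{SG}=\wp(\mathit{VI})\setminus\{\emptyset\}$, $\mathit{SH}=\wp(\mathit{SG})$. $\rho_{\mathit{TSD}_k}(sh)=\{\,S\in\mathit{SG}\mid \forall T\subseteq S:\ \#T<k\implies S=\bigcup\{U\in sh\mid T\subseteq U\subseteq S\}\,\}$. $\mathit{Subst}$: idempotent substitutions (finite sets of bindings $x\mapsto t$ with $t\ne x$ a first-order term), with variables in $\mathit{VI}$; $\mathrm{vars}(t)$ is the set of variables of $t$. $\mathrm{bin}(sh_1,sh_2)=\{S_1\cup S_2\mid S_i\in sh_i\}$; $sh^\star=\{S\in\mathit{SG}\mid\exists sh'\subseteq sh: S=\bigcup sh'\}$; $\mathrm{rel}(V,sh)=\{S\in sh\mid S\cap V\ne\emptyset\}$; with $v_x=\{x\}$, $v_t=\mathrm{vars}(t)$, $v_{xt}=v_x\cup v_t$: $\mathrm{amgu}(sh,x\mapsto t)=(sh\setminus\mathrm{rel}(v_{xt},sh))\cup\mathrm{bin}(\mathrm{rel}(v_x,sh)^\star,\mathrm{rel}(v_t,sh)^\star)$;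 $\mathrm{amgu}(sh,\emptyset)=sh$, $\mathrm{amgu}(sh,\{x\mapsto t\}\cup\sigma)=\mathrm{amgu}(\mathrm{amgu}(sh,x\mapsto t),\sigma\setminus\{x\mapsto t\})$. *)

theory Defs
  imports Main
begin

datatype ('f, 'v) fterm = Var 'v | Fn 'f "('f, 'v) fterm list"

fun vars :: "('f, 'v) fterm \<Rightarrow> 'v set" where
  "vars (Var x) = {x}"
| "vars (Fn f ts) = (\<Union>t\<in>set ts. vars t)"

definition SG :: "'v set \<Rightarrow> 'v set set" where
  "SG VI = Pow VI - {{}}"

definition SH :: "'v set \<Rightarrow> 'v set set set" where
  "SH VI = Pow (SG VI)"

definition rho_TSD :: "'v set \<Rightarrow> nat \<Rightarrow> 'v set set \<Rightarrow> 'v set set" where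
  "rho_TSD VI k sh = {S \<in> SG VI. \<forall>T. T \<subseteq> S \<longrightarrow> card T < k \<longrightarrow>
       S = \<Union>{U \<in> sh. T \<subseteq> U \<and> U \<subseteq> S}}"

definition bin :: "'v set set \<Rightarrow> 'v set set \<Rightarrow> 'v set set" where
  "bin sh1 sh2 = {S1 \<union> S2 | S1 S2. S1 \<in> sh1 \<and> S2 \<in> sh2}"

definition star :: "'v set \<Rightarrow> 'v set set \<Rightarrow> 'v set set" where
  "star VI sh = {S \<in> SG VI. \<exists>sh'. sh' \<subseteq> sh \<and> S = \<Union>sh'}"

definition rel :: "'v set \<Rightarrow> 'v set set \<Rightarrow> 'v set set" where
  "rel V sh = {S \<in> sh. S \<inter> V \<noteq> {}}"

definition amgu1 :: "'v set \<Rightarrow> 'v set set \<Rightarrow> 'v \<times> ('f, 'v) fterm \<Rightarrow> 'v set set" where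
  "amgu1 VI sh b = (case b of (x, t) \<Rightarrow>
      (sh - rel ({x} \<union> vars t) sh) \<union> bin (star VI (rel {x} sh)) (star VI (rel (vars t) sh)))"

fun amgu :: "'v set \<Rightarrow> 'v set set \<Rightarrow> ('v \<times> ('f, 'v) fterm) list \<Rightarrow> 'v set set" where
  "amgu VI sh [] = sh"
| "amgu VI sh (b # bs) = amgu VI (amgu1 VI sh b) bs"

fun subst_apply :: "('v \<times> ('f, 'v) fterm) list \<Rightarrow> ('f, 'v) fterm \<Rightarrow> ('f, 'v) fterm" where
  "subst_apply \<sigma> (Var x) = (case map_of \<sigma> x of Some t \<Rightarrow> t | None \<Rightarrow> Var x)"
| "subst_apply \<sigma> (Fn f ts) = Fn f (map (subst_apply \<sigma>) ts)"

definition is_Subst :: "'v set \<Rightarrow> ('v \<times> ('f, 'v) fterm) list \<Rightarrow> bool" where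
  "is_Subst VI \<sigma> \<longleftrightarrow> distinct (map fst \<sigma>)
     \<and> (\<forall>(x, t) \<in> set \<sigma>. t \<noteq> Var x \<and> x \<in> VI \<and> vars t \<subseteq> VI)
     \<and> (\<forall>t. subst_apply \<sigma> (subst_apply \<sigma> t) = subst_apply \<sigma> t)"

end

theory Submission
  imports Defs
begin

text \<open>The abstraction \<open>rho_TSD VI k\<close> is a closure operator on sharing sets, and one abstract
  unification step satisfies \<open>amgu1 (rho sh) \<subseteq> rho (amgu1 sh)\<close>. Since \<open>amgu1\<close> is monotone,
  \<open>rho \<circ> amgu1 = rho \<circ> amgu1 \<circ> rho\<close>, and the theorem follows by induction over the bindings.
  For the inclusion, a new group \<open>S\<close> of \<open>amgu1 (rho sh)\<close> is a union of \<open>rho sh\<close>-groups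
  meeting \<open>{x} \<union> vars t\<close>; the union \<open>U\<^sub>0\<close> of the \<open>sh\<close>-groups below \<open>S\<close> that meet
  \<open>{x} \<union> vars t\<close> is a group of \<open>amgu1 sh\<close>. If \<open>k \<ge> 2\<close>, the covering condition for singletons
  \<open>T = {v}\<close> covers every \<open>rho sh\<close>-group by the \<open>sh\<close>-groups below it that contain a chosen
  \<open>v\<close>, so \<open>S = U\<^sub>0\<close>. If \<open>k = 1\<close>, \<open>S\<close> is still covered by \<open>U\<^sub>0\<close> and by groups of \<open>sh\<close>
  that \<open>amgu1\<close> leaves untouched.\<close>

lemma mem_rho_TSD_iff:
  "S \<in> rho_TSD VI k sh \<longleftrightarrow> S \<in> SG VI \<and>
     (\<forall>T y. T \<subseteq> S \<longrightarrow> card T < k \<longrightarrow> y \<in> S \<longrightarrow> (\<exists>U\<in>sh. T \<subseteq> U \<and> y \<in> U \<and> U \<subseteq> S))"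
  unfolding rho_TSD_def by blast

lemma rho_TSD_memI:
  assumes "S \<in> SG VI"
    and "\<And>T y. T \<subseteq> S \<Longrightarrow> card T < k \<Longrightarrow> y \<in> S \<Longrightarrow> \<exists>U\<in>sh. T \<subseteq> U \<and> y \<in> U \<and> U \<subseteq> S"
  shows "S \<in> rho_TSD VI k sh"
  using assms unfolding mem_rho_TSD_iff by blast

lemma rho_TSD_cover:
  assumes "W \<in> rho_TSD VI k sh" "T \<subseteq> W" "card T < k" "y \<in> W"
  shows "\<exists>U\<in>sh. T \<subseteq> U \<and> y \<in> U \<and> U \<subseteq> W"
  using assms unfolding mem_rho_TSD_iff by blast

lemma rho_TSD_subset_SG: "rho_TSD VI k sh \<subseteq> SG VI"
  unfolding rho_TSD_def by blast

lemma rho_TSD_extensive: "S \<in> sh \<Longrightarrow> S \<in> SG VI \<Longrightarrow> S \<in> rho_TSD VI k sh"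
  unfolding mem_rho_TSD_iff by blast

lemma rho_TSD_mono_below:
  assumes S: "S \<in> rho_TSD VI k sh" and below: "{U \<in> sh. U \<subseteq> S} \<subseteq> sh'"
  shows "S \<in> rho_TSD VI k sh'"
proof (rule rho_TSD_memI)
  show "S \<in> SG VI"
    using S rho_TSD_subset_SG by blast
  fix T y assume "T \<subseteq> S" "card T < k" "y \<in> S"
  then obtain U where "U \<in> sh" "T \<subseteq> U" "y \<in> U" "U \<subseteq> S"
    using rho_TSD_cover[OF S] by blast
  with below show "\<exists>U\<in>sh'. T \<subseteq> U \<and> y \<in> U \<and> U \<subseteq> S"
    by blast
qed

lemma rho_TSD_mono:
  assumes "sh \<subseteq> sh'"
  shows "rho_TSD VI k sh \<subseteq> rho_TSD VI k sh'"
proof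
  fix S assume "S \<in> rho_TSD VI k sh"
  then show "S \<in> rho_TSD VI k sh'"
    by (rule rho_TSD_mono_below) (use assms in blast)
qed

lemma rho_TSD_idem: "rho_TSD VI k (rho_TSD VI k sh) = rho_TSD VI k sh"
proof
  show "rho_TSD VI k (rho_TSD VI k sh) \<subseteq> rho_TSD VI k sh"
  proof
    fix S assume S: "S \<in> rho_TSD VI k (rho_TSD VI k sh)"
    show "S \<in> rho_TSD VI k sh"
    proof (rule rho_TSD_memI)
      show "S \<in> SG VI"
        using S rho_TSD_subset_SG by blast
      fix T y assume Ty: "T \<subseteq> S" "card T < k" "y \<in> S"
      obtain U where U: "U \<in> rho_TSD VI k sh" "T \<subseteq> U" "y \<in> U" "U \<subseteq> S"
        using rho_TSD_cover[OF S Ty] by blast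
      obtain V where "V \<in> sh" "T \<subseteq> V" "y \<in> V" "V \<subseteq> U"
        using rho_TSD_cover[OF U(1,2) Ty(2) U(3)] by blast
      with U(4) show "\<exists>V\<in>sh. T \<subseteq> V \<and> y \<in> V \<and> V \<subseteq> S"
        by blast
    qed
  qed
  show "rho_TSD VI k sh \<subseteq> rho_TSD VI k (rho_TSD VI k sh)"
    using rho_TSD_subset_SG by (blast intro: rho_TSD_extensive)
qed

lemma mem_rho_TSD_1_iff:
  assumes "finite VI"
  shows "S \<in> rho_TSD VI 1 sh \<longleftrightarrow> S \<in> SG VI \<and> (\<forall>y\<in>S. \<exists>U\<in>sh. y \<in> U \<and> U \<subseteq> S)"
proof -
  have "finite T" if "T \<subseteq> S" "S \<in> SG VI" for T
    using that assms unfolding SG_def by (metis DiffD1 PowD finite_subset)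
  then show ?thesis
    unfolding mem_rho_TSD_iff by (metis card_eq_0_iff empty_subsetI less_one)
qed

lemma rel_rho_TSD_contains_rel:
  assumes "1 \<le> k" "W \<in> rel V (rho_TSD VI k sh)"
  shows "\<exists>U\<in>rel V sh. U \<subseteq> W"
proof -
  obtain v where "W \<in> rho_TSD VI k sh" "v \<in> W" "v \<in> V"
    using assms(2) unfolding rel_def by blast
  then obtain U where "U \<in> sh" "v \<in> U" "U \<subseteq> W"
    using rho_TSD_cover[of W VI k sh "{}" v] assms(1) by auto
  with \<open>v \<in> V\<close> show ?thesis
    unfolding rel_def by blast
qed

lemma Union_rel_rho_TSD:
  assumes "2 \<le> k" "F \<subseteq> rel V (rho_TSD VI k sh)"
  shows "\<Union>F = \<Union>{U \<in> rel V sh. U \<subseteq> \<Union>F}"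
proof
  show "\<Union>F \<subseteq> \<Union>{U \<in> rel V sh. U \<subseteq> \<Union>F}"
  proof
    fix y assume "y \<in> \<Union>F"
    then obtain W v where W: "W \<in> F" "y \<in> W" "W \<in> rho_TSD VI k sh" "v \<in> W" "v \<in> V"
      using assms(2) unfolding rel_def by blast
    moreover have "card {v} < k"
      using assms(1) by simp
    ultimately obtain U where "U \<in> sh" "v \<in> U" "y \<in> U" "U \<subseteq> W"
      using rho_TSD_cover[of W VI k sh "{v}" y] by auto
    with W(1) \<open>v \<in> V\<close> show "y \<in> \<Union>{U \<in> rel V sh. U \<subseteq> \<Union>F}"
      unfolding rel_def by blast
  qed
qed blast

lemma rel_mono: "sh \<subseteq> sh' \<Longrightarrow> rel V sh \<subseteq> rel V sh'"
  unfolding rel_def by blast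

lemma star_mono: "sh \<subseteq> sh' \<Longrightarrow> star VI sh \<subseteq> star VI sh'"
  unfolding star_def by blast

lemma bin_mono: "A \<subseteq> A' \<Longrightarrow> B \<subseteq> B' \<Longrightarrow> bin A B \<subseteq> bin A' B'"
  unfolding bin_def by blast

lemma amgu1_mono:
  assumes "sh \<subseteq> sh'"
  shows "amgu1 VI sh b \<subseteq> amgu1 VI sh' b"
proof -
  obtain x t where b: "b = (x, t)" by fastforce
  have "sh - rel ({x} \<union> vars t) sh \<subseteq> sh' - rel ({x} \<union> vars t) sh'"
    using assms unfolding rel_def by blast
  moreover have "bin (star VI (rel {x} sh)) (star VI (rel (vars t) sh))
      \<subseteq> bin (star VI (rel {x} sh')) (star VI (rel (vars t) sh'))"
    using assms by (intro bin_mono star_mono rel_mono)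
  ultimately show ?thesis
    unfolding b amgu1_def by auto
qed

lemma amgu1_subset_SG: "sh \<subseteq> SG VI \<Longrightarrow> amgu1 VI sh b \<subseteq> SG VI"
  unfolding amgu1_def rel_def bin_def star_def SG_def by (cases b) auto

lemma amgu1_keeps_unrelated:
  "U \<in> sh \<Longrightarrow> U \<inter> ({x} \<union> vars t) = {} \<Longrightarrow> U \<in> amgu1 VI sh (x, t)"
  unfolding amgu1_def rel_def by blast

lemma amgu1_Union_related:
  assumes "P \<subseteq> rel {x} sh" "P \<noteq> {}" "Q \<subseteq> rel (vars t) sh" "Q \<noteq> {}"
    and "\<Union>P \<union> \<Union>Q \<subseteq> VI"
  shows "\<Union>P \<union> \<Union>Q \<in> amgu1 VI sh (x, t)"
proof -
  have "\<Union>P \<in> star VI (rel {x} sh)" "\<Union>Q \<in> star VI (rel (vars t) sh)"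
    using assms unfolding star_def SG_def rel_def by blast+
  then show ?thesis
    unfolding amgu1_def bin_def by blast
qed

lemma mem_amgu1E:
  assumes "S \<in> amgu1 VI sh (x, t)"
  obtains (unrelated) "S \<in> sh" "S \<inter> ({x} \<union> vars t) = {}"
    | (bin) F1 F2 where "F1 \<subseteq> rel {x} sh" "F1 \<noteq> {}" "F2 \<subseteq> rel (vars t) sh" "F2 \<noteq> {}"
        "S = \<Union>F1 \<union> \<Union>F2"
  using assms unfolding amgu1_def bin_def star_def rel_def SG_def by auto

lemma amgu1_Union_rel_below:
  assumes "1 \<le> k" and "S \<subseteq> VI"
    and F1: "F1 \<subseteq> rel {x} (rho_TSD VI k sh)" "F1 \<noteq> {}" "\<Union>F1 \<subseteq> S"
    and F2: "F2 \<subseteq> rel (vars t) (rho_TSD VI k sh)" "F2 \<noteq> {}" "\<Union>F2 \<subseteq> S"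
  shows "\<Union>{U \<in> rel {x} sh. U \<subseteq> S} \<union> \<Union>{U \<in> rel (vars t) sh. U \<subseteq> S} \<in> amgu1 VI sh (x, t)"
proof (rule amgu1_Union_related)
  obtain W1 U1 where "W1 \<in> F1" "U1 \<in> rel {x} sh" "U1 \<subseteq> W1"
    using F1(1,2) rel_rho_TSD_contains_rel[OF \<open>1 \<le> k\<close>] by blast
  with F1(3) show "{U \<in> rel {x} sh. U \<subseteq> S} \<noteq> {}"
    by blast
  obtain W2 U2 where "W2 \<in> F2" "U2 \<in> rel (vars t) sh" "U2 \<subseteq> W2"
    using F2(1,2) rel_rho_TSD_contains_rel[OF \<open>1 \<le> k\<close>] by blast
  with F2(3) show "{U \<in> rel (vars t) sh. U \<subseteq> S} \<noteq> {}"
    by blast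
qed (use \<open>S \<subseteq> VI\<close> in auto)

lemma bin_rho_TSD_in_amgu1:
  assumes "2 \<le> k" and "S \<subseteq> VI"
    and F1: "F1 \<subseteq> rel {x} (rho_TSD VI k sh)" "F1 \<noteq> {}"
    and F2: "F2 \<subseteq> rel (vars t) (rho_TSD VI k sh)" "F2 \<noteq> {}"
    and S: "S = \<Union>F1 \<union> \<Union>F2"
  shows "S \<in> amgu1 VI sh (x, t)"
proof -
  let ?U0 = "\<Union>{U \<in> rel {x} sh. U \<subseteq> S} \<union> \<Union>{U \<in> rel (vars t) sh. U \<subseteq> S}"
  have "\<Union>F1 \<subseteq> \<Union>{U \<in> rel {x} sh. U \<subseteq> S}"
    by (subst Union_rel_rho_TSD[OF \<open>2 \<le> k\<close> F1(1)]) (auto simp: S)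
  moreover have "\<Union>F2 \<subseteq> \<Union>{U \<in> rel (vars t) sh. U \<subseteq> S}"
    by (subst Union_rel_rho_TSD[OF \<open>2 \<le> k\<close> F2(1)]) (auto simp: S)
  ultimately have "S = ?U0"
    unfolding S by blast
  also have "?U0 \<in> amgu1 VI sh (x, t)"
  proof (rule amgu1_Union_rel_below[OF _ \<open>S \<subseteq> VI\<close> F1 _ F2])
    show "1 \<le> k"
      using \<open>2 \<le> k\<close> by simp
  qed (simp_all add: S)
  finally show ?thesis .
qed

lemma bin_rho_TSD_1_in_rho_TSD_amgu1:
  assumes "finite VI" and S_SG: "S \<in> SG VI"
    and F1: "F1 \<subseteq> rel {x} (rho_TSD VI 1 sh)" "F1 \<noteq> {}"
    and F2: "F2 \<subseteq> rel (vars t) (rho_TSD VI 1 sh)" "F2 \<noteq> {}"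
    and S: "S = \<Union>F1 \<union> \<Union>F2"
  shows "S \<in> rho_TSD VI 1 (amgu1 VI sh (x, t))"
proof -
  let ?U0 = "\<Union>{U \<in> rel {x} sh. U \<subseteq> S} \<union> \<Union>{U \<in> rel (vars t) sh. U \<subseteq> S}"
  have "S \<subseteq> VI"
    using S_SG unfolding SG_def by blast
  have U0: "?U0 \<in> amgu1 VI sh (x, t)"
    by (rule amgu1_Union_rel_below[OF _ \<open>S \<subseteq> VI\<close> F1 _ F2]) (simp_all add: S)
  have "\<exists>U\<in>amgu1 VI sh (x, t). y \<in> U \<and> U \<subseteq> S" if "y \<in> S" for y
  proof -
    obtain W where "W \<in> rho_TSD VI 1 sh" "y \<in> W" "W \<subseteq> S"
      using \<open>y \<in> S\<close> F1(1) F2(1) unfolding S rel_def by blast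
    then obtain V where V: "V \<in> sh" "y \<in> V" "V \<subseteq> S"
      using rho_TSD_cover[of W VI 1 sh "{}" y] by auto
    show ?thesis
    proof (cases "V \<inter> ({x} \<union> vars t) = {}")
      case True
      then have "V \<in> amgu1 VI sh (x, t)"
        using V(1) by (rule amgu1_keeps_unrelated[rotated])
      with V(2,3) show ?thesis by blast
    next
      case False
      then have "V \<subseteq> ?U0"
        using V(1,3) unfolding rel_def by blast
      with U0 V(2) show ?thesis
        by (intro bexI[of _ ?U0]) auto
    qed
  qed
  with S_SG show ?thesis
    unfolding mem_rho_TSD_1_iff[OF \<open>finite VI\<close>] by blast
qed

lemma amgu1_rho_TSD_subset:
  assumes "finite VI" and "1 \<le> k"
  shows "amgu1 VI (rho_TSD VI k sh) (x, t) \<subseteq> rho_TSD VI k (amgu1 VI sh (x, t))"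
proof
  fix S assume S: "S \<in> amgu1 VI (rho_TSD VI k sh) (x, t)"
  then have S_SG: "S \<in> SG VI"
    using amgu1_subset_SG[OF rho_TSD_subset_SG] by blast
  from S show "S \<in> rho_TSD VI k (amgu1 VI sh (x, t))"
  proof (cases rule: mem_amgu1E)
    case unrelated
    then have "{U \<in> sh. U \<subseteq> S} \<subseteq> amgu1 VI sh (x, t)"
      by (blast intro: amgu1_keeps_unrelated)
    with unrelated(1) show ?thesis
      by (rule rho_TSD_mono_below)
  next
    case (bin F1 F2)
    show ?thesis
    proof (cases "k = 1")
      case True
      from bin show ?thesis
        unfolding True by (rule bin_rho_TSD_1_in_rho_TSD_amgu1[OF \<open>finite VI\<close> S_SG])
    next
      case False
      with \<open>1 \<le> k\<close> have "2 \<le> k" by simp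
      with bin S_SG have "S \<in> amgu1 VI sh (x, t)"
        unfolding SG_def by (intro bin_rho_TSD_in_amgu1) auto
      then show ?thesis
        using S_SG by (rule rho_TSD_extensive)
    qed
  qed
qed

lemma rho_TSD_amgu1_rho_TSD:
  assumes "finite VI" and "1 \<le> k" and "sh \<subseteq> SG VI"
  shows "rho_TSD VI k (amgu1 VI (rho_TSD VI k sh) b) = rho_TSD VI k (amgu1 VI sh b)"
proof
  obtain x t where b: "b = (x, t)" by fastforce
  have "rho_TSD VI k (amgu1 VI (rho_TSD VI k sh) b)
      \<subseteq> rho_TSD VI k (rho_TSD VI k (amgu1 VI sh b))"
    unfolding b using assms(1,2) by (intro rho_TSD_mono amgu1_rho_TSD_subset)
  then show "rho_TSD VI k (amgu1 VI (rho_TSD VI k sh) b) \<subseteq> rho_TSD VI k (amgu1 VI sh b)"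
    by (simp only: rho_TSD_idem)
  have "sh \<subseteq> rho_TSD VI k sh"
    using assms(3) by (blast intro: rho_TSD_extensive)
  then show "rho_TSD VI k (amgu1 VI sh b) \<subseteq> rho_TSD VI k (amgu1 VI (rho_TSD VI k sh) b)"
    by (intro rho_TSD_mono amgu1_mono)
qed

lemma rho_TSD_amgu_cong:
  assumes "finite VI" and "1 \<le> k"
    and "sh \<subseteq> SG VI" "sh' \<subseteq> SG VI" "rho_TSD VI k sh = rho_TSD VI k sh'"
  shows "rho_TSD VI k (amgu VI sh \<sigma>) = rho_TSD VI k (amgu VI sh' \<sigma>)"
  using assms(3-)
proof (induction \<sigma> arbitrary: sh sh')
  case Nil
  then show ?case by simp
next
  case (Cons b \<sigma>)
  have "rho_TSD VI k (amgu1 VI sh b) = rho_TSD VI k (amgu1 VI sh' b)"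
    using rho_TSD_amgu1_rho_TSD[OF assms(1,2)] Cons.prems by metis
  moreover have "amgu1 VI sh b \<subseteq> SG VI" "amgu1 VI sh' b \<subseteq> SG VI"
    using Cons.prems by (simp_all add: amgu1_subset_SG)
  ultimately show ?case
    using Cons.IH[of "amgu1 VI sh b" "amgu1 VI sh' b"] by simp
qed

theorem lemma3p20:
  fixes VI :: "'v set" and n k :: nat
    and sh1 sh2 :: "'v set set" and \<sigma> :: "('v \<times> ('f, 'v) fterm) list"
  assumes "finite VI" and "card VI = n"
    and "sh1 \<in> SH VI" and "sh2 \<in> SH VI"
    and "is_Subst VI \<sigma>"
    and "1 \<le> k" and "k \<le> n"
    and "rho_TSD VI k sh1 = rho_TSD VI k sh2"
  shows "rho_TSD VI k (amgu VI sh1 \<sigma>) = rho_TSD VI k (amgu VI sh2 \<sigma>)"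
proof -
  have "sh1 \<subseteq> SG VI" "sh2 \<subseteq> SG VI"
    using assms(3,4) unfolding SH_def by simp_all
  with assms(1,6,8) show ?thesis
    by (intro rho_TSD_amgu_cong)
qed

end
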